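(* Let $f$, $Q$, $L$, $d_Q$ be as in the context, let $x^*\in Q$ be a minimizer of $f$ over $Q$ with $f^*=f(x^* )$, let $T\in\mathbb{N}_0$, and let the sequences $(z_t)$, $(\hat x_t)$, $(u_t)$, $(\Gamma_t)$, $(L_t)$ be generated by the algorithm described in the context. Then \[ f(u_T)-f^*\le\frac{1}{\Gamma_T}\Big[L_Td_Q(x^* )+\sum_{t=0}^{T-1}(L_t-L_{t+1})\Big(d_Q(z_{t+1})-\tfrac12\|z_t-\hat x_{t+1}\|^2\Big)\Big]. \]
   Context: $\mathbb{R}^n$ carries the standard scalar product $\langle\cdot,\cdot\rangle$ and a (possibly different) norm $\|\cdot\|$, with dual norm $\|u\|_*=\max\{\langle u,x\rangle:\|x\|=1\}$. $Q\subseteq\mathbb{R}^n$ is closed and convex; $f:\mathbb{R}^n\to\mathbb{R}$ is convex, differentiable, attains its minimum on $Q$, and $L>0$ satisfies $\|\nabla f(x)-\nabla f(y)\|_*\le L\|x-y\|$ for all $x,y\in Q$. A distance-generating function for $Q$ is $d_Q:Q\to\mathbb{R}_{\ge0}$ that is continuous on $Q$, strongly convex with modulus 1 w.r.t. $\|\cdot\|$, and whose subdifferential admits a continuous selection $d_Q'$ on $Q^o:=\{x\in Q:\partial d_Q(x)\neq\emptyset\}$. For $z\in Q^o$, $V_z(x)=d_Q(x)-d_Q(z)-\langle d_Q'(z),x-z\rangle$ and $\mathrm{Prox}_{Q,z}(s)=\arg\min_{x\in Q}\{\langle s,x-z\rangle+V_z(x)\}$. The $d_Q$-center is $c(d_Q)=\arg\min_{x\in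 Q}d_Q(x)$, and it is assumed that $d_Q(c(d_Q))=0$. Algorithm: choose $T\in\mathbb{N}_0$ and numbers $(\gamma_t)_{t=0}^{T+1}$ with $\gamma_0\in(0,1]$, $\gamma_t\ge0$ and $\gamma_t^2\le\Gamma_t:=\sum_{k=0}^t\gamma_k$ for all $0\le t\le T+1$. Set $L_0=L$, $x_0=c(d_Q)$, $u_0=\arg\min_{x\in Q}\{\gamma_0(f(x_0)+\langle\nabla f(x_0),x-x_0\rangle)+L_0d_Q(x)\}$, $z_0=u_0$, $\tau_0=\gamma_1/\Gamma_1$, $x_1=\tau_0z_0+(1-\tau_0)u_0$, $\hat x_1=\mathrm{Prox}_{Q,z_0}(\gamma_1\nabla f(x_1)/L_0)$, $u_1=\tau_0\hat x_1+(1-\tau_0)u_0$. For $t=1,\dots,T$: choose $0<L_t\le L$ with $f(u_t)\le f(x_t)+\langle\nabla f(x_t),u_t-x_t\rangle+\frac{L_t}{2}\|u_t-x_t\|^2$; set $z_t=\arg\min_{x\in Q}\{\sum_{k=0}^t\gamma_k(f(x_k)+\langle\nabla f(x_k),x-x_k\rangle)+L_td_Q(x)\}$; set $\tau_t=\gamma_{t+1}/\Gamma_{t+1}$ and $x_{t+1}=\tau_tz_t+(1-\tau_t)u_t$; set $\hat x_{t+1}=\mathrm{Prox}_{Q,z_t}(\gamma_{t+1}\nabla f(x_{t+1})/L_t)$; set $u_{t+1}=\tau_t\hat x_{t+1}+(1-\tau_t)u_t$. *)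

theory Defs
  imports "HOL-Analysis.Analysis"
begin

definition is_norm :: "('a::euclidean_space \<Rightarrow> real) \<Rightarrow> bool" where
  "is_norm N \<longleftrightarrow> (\<forall>x. N x = 0 \<longleftrightarrow> x = 0) \<and> (\<forall>a x. N (a *\<^sub>R x) = \<bar>a\<bar> * N x)
      \<and> (\<forall>x y. N (x + y) \<le> N x + N y)"

definition dual_norm :: "('a::euclidean_space \<Rightarrow> real) \<Rightarrow> 'a \<Rightarrow> real" where
  "dual_norm N u = Sup ((\<lambda>x. u \<bullet> x) ` {x. N x = 1})"

definition strongly_convex_1 :: "('a::euclidean_space \<Rightarrow> real) \<Rightarrow> 'a set \<Rightarrow> ('a \<Rightarrow> real) \<Rightarrow> bool" where
  "strongly_convex_1 N Q d \<longleftrightarrow> (\<forall>x\<in>Q. \<forall>y\<in>Q. \<forall>a::real. 0 \<le> a \<and> a \<le> 1 \<longrightarrow>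
      d (a *\<^sub>R x + (1 - a) *\<^sub>R y) \<le> a * d x + (1 - a) * d y - 1/2 * a * (1 - a) * (N (x - y))\<^sup>2)"

definition subdiff_on :: "'a set \<Rightarrow> ('a::euclidean_space \<Rightarrow> real) \<Rightarrow> 'a \<Rightarrow> 'a set" where
  "subdiff_on Q d x = {g. \<forall>y\<in>Q. d y \<ge> d x + g \<bullet> (y - x)}"

definition dom_subdiff :: "'a set \<Rightarrow> ('a::euclidean_space \<Rightarrow> real) \<Rightarrow> 'a set" where
  "dom_subdiff Q d = {x\<in>Q. subdiff_on Q d x \<noteq> {}}"

definition argmin_on :: "'a set \<Rightarrow> ('a \<Rightarrow> real) \<Rightarrow> 'a \<Rightarrow> bool" where
  "argmin_on Q g x \<longleftrightarrow> x \<in> Q \<and> (\<forall>y\<in>Q. g x \<le> g y)"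

definition bregman :: "('a::euclidean_space \<Rightarrow> real) \<Rightarrow> ('a \<Rightarrow> 'a) \<Rightarrow> 'a \<Rightarrow> 'a \<Rightarrow> real" where
  "bregman d d' z x = d x - d z - d' z \<bullet> (x - z)"

definition is_prox :: "'a set \<Rightarrow> ('a::euclidean_space \<Rightarrow> real) \<Rightarrow> ('a \<Rightarrow> 'a) \<Rightarrow> 'a \<Rightarrow> 'a \<Rightarrow> 'a \<Rightarrow> bool" where
  "is_prox Q d d' z s p \<longleftrightarrow> argmin_on Q (\<lambda>x. s \<bullet> (x - z) + bregman d d' z x) p"

definition Gam :: "(nat \<Rightarrow> real) \<Rightarrow> nat \<Rightarrow> real" where
  "Gam \<gamma> t = (\<Sum>k\<le>t. \<gamma> k)"

end

theory Submission
  imports Defs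
begin

text \<open>Let \<open>model t y = (\<Sum>k\<le>t. \<gamma> k * (f (x k) + f' (x k) \<bullet> (y - x k))) + L t * d y\<close> be the
  function minimised by \<open>z t\<close>, and \<open>correction t\<close> the sum in the bound. By induction on \<open>t\<close>,
  \<open>\<Gamma> t * f (u t) \<le> model t (z t) + correction t\<close>. In the step, the descent condition on
  \<open>L (t+1)\<close>, convexity of \<open>f\<close> and \<open>\<gamma> (t+1)\<^sup>2 \<le> \<Gamma> (t+1)\<close> bound \<open>\<Gamma> (t+1) * f (u (t+1))\<close> by
  linearisations at \<open>x (t+1)\<close> plus \<open>L (t+1)/2 * \<parallel>z t - xh (t+1)\<parallel>\<^sup>2\<close>; the prox step pays for this
  quadratic term through \<open>V\<^sub>z x \<ge> \<parallel>x - z\<parallel>\<^sup>2/2\<close> and the three-point inequality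
  \<open>model t y \<ge> model t (z t) + L t * V\<^bsub>z t\<^esub> y\<close>, up to the change from \<open>L t\<close> to \<open>L (t+1)\<close>,
  which is what the correction records. Since \<open>model T \<le> \<Gamma> T * f + L T * d\<close> by convexity,
  evaluating at \<open>x\<^sup>*\<close> gives the rate.

  The three-point inequality is the first-order optimality condition for \<open>z t\<close>. As \<open>d'\<close> is
  only a continuous selection on \<open>Q\<^sup>o\<close>, it is obtained by approaching \<open>z t\<close> through points of
  \<open>Q\<^sup>o\<close>; these are dense in \<open>Q\<close> because they contain the minimisers of \<open>d + K \<parallel>\<cdot> - w\<parallel>\<^sup>2\<close>.\<close>

lemma le_of_le_add_small_multiples:
  fixes a b C :: real
  assumes "\<And>t. 0 < t \<Longrightarrow> t \<le> 1 \<Longrightarrow> a \<le> b + t * C"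
  shows "a \<le> b"
proof (rule ccontr)
  assume "\<not> a \<le> b"
  define t where "t = min 1 ((a - b) / (2 * (\<bar>C\<bar> + 1)))"
  have t: "0 < t" "t \<le> 1" using \<open>\<not> a \<le> b\<close> by (auto simp: t_def)
  have "t * C \<le> t * (\<bar>C\<bar> + 1)" using t by (intro mult_left_mono) auto
  also have "\<dots> \<le> (a - b) / (2 * (\<bar>C\<bar> + 1)) * (\<bar>C\<bar> + 1)"
    by (intro mult_right_mono) (auto simp: t_def)
  also have "\<dots> = (a - b) / 2" by (simp add: field_simps)
  finally have "t * C \<le> (a - b) / 2" .
  then show False using assms[OF t] \<open>\<not> a \<le> b\<close> by (simp add: field_simps)
qed

section \<open>Norms\<close>

lemma is_norm_scaleR: "is_norm N \<Longrightarrow> N (c *\<^sub>R x) = \<bar>c\<bar> * N x"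
  and is_norm_triangle: "is_norm N \<Longrightarrow> N (x + y) \<le> N x + N y"
  and is_norm_eq_0_iff: "is_norm N \<Longrightarrow> N x = 0 \<longleftrightarrow> x = 0"
  by (auto simp: is_norm_def)

lemma is_norm_zero: "is_norm N \<Longrightarrow> N 0 = 0"
  by (simp add: is_norm_eq_0_iff)

lemma is_norm_minus: "is_norm N \<Longrightarrow> N (- x) = N x"
  using is_norm_scaleR[of N "-1" x] by simp

lemma is_norm_commute: "is_norm N \<Longrightarrow> N (x - y) = N (y - x)"
  using is_norm_minus[of N "x - y"] by simp

lemma is_norm_nonneg: "is_norm N \<Longrightarrow> 0 \<le> N x"
  using is_norm_triangle[of N x "- x"] is_norm_minus[of N x] is_norm_zero[of N] by simp

lemma is_norm_pos: "is_norm N \<Longrightarrow> x \<noteq> 0 \<Longrightarrow> 0 < N x"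
  using is_norm_nonneg[of N x] is_norm_eq_0_iff[of N x] by linarith

lemma is_norm_sum: "is_norm N \<Longrightarrow> N (sum g A) \<le> (\<Sum>i\<in>A. N (g i))"
  by (induction A rule: infinite_finite_induct)
    (auto intro: order_trans[OF is_norm_triangle] simp: is_norm_zero)

lemma is_norm_le_mult_norm:
  fixes N :: "'a::euclidean_space \<Rightarrow> real"
  assumes N: "is_norm N"
  obtains C where "C \<ge> 0" "\<And>x. N x \<le> C * norm x"
proof
  define C where "C = (\<Sum>i\<in>(Basis::'a set). N i)"
  show "C \<ge> 0" unfolding C_def by (intro sum_nonneg is_norm_nonneg[OF N])
  fix x :: 'a
  have "N x = N (\<Sum>i\<in>Basis. (x \<bullet> i) *\<^sub>R i)" by (simp add: euclidean_representation)
  also have "\<dots> \<le> (\<Sum>i\<in>Basis. \<bar>x \<bullet> i\<bar> * N i)"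
    using is_norm_sum[OF N, of "\<lambda>i. (x \<bullet> i) *\<^sub>R i" Basis] by (simp add: is_norm_scaleR[OF N])
  also have "\<dots> \<le> (\<Sum>i\<in>(Basis::'a set). norm x * N i)"
    by (intro sum_mono mult_right_mono) (auto simp: Basis_le_norm is_norm_nonneg[OF N])
  also have "\<dots> = C * norm x" by (simp add: C_def sum_distrib_left mult.commute)
  finally show "N x \<le> C * norm x" .
qed

lemma continuous_on_is_norm:
  fixes N :: "'a::euclidean_space \<Rightarrow> real"
  assumes N: "is_norm N"
  shows "continuous_on S N"
proof -
  obtain C where C: "C \<ge> 0" "\<And>x. N x \<le> C * norm x" using is_norm_le_mult_norm[OF N] by blast
  have "\<bar>N x - N y\<bar> \<le> C * norm (x - y)" for x y
    using is_norm_triangle[OF N, of y "x - y"] is_norm_triangle[OF N, of x "y - x"]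
      is_norm_commute[OF N, of x y] C(2)[of "x - y"] by simp
  then have "lipschitz_on C UNIV N"
    by (intro lipschitz_onI) (auto simp: C dist_real_def dist_norm)
  then show ?thesis
    using continuous_on_subset lipschitz_on_continuous_on by blast
qed

lemma is_norm_ge_mult_norm:
  fixes N :: "'a::euclidean_space \<Rightarrow> real"
  assumes N: "is_norm N"
  obtains c where "c > 0" "\<And>x. c * norm x \<le> N x"
proof -
  let ?S = "sphere (0::'a) 1"
  obtain p where p: "p \<in> ?S" "\<And>y. y \<in> ?S \<Longrightarrow> N p \<le> N y"
    using continuous_attains_inf[OF compact_sphere _ continuous_on_is_norm[OF N], of 0 1]
    by (auto simp: sphere_eq_empty)
  have "N p * norm x \<le> N x" for x
  proof (cases "x = 0")
    case False
    then have "N p \<le> N ((1 / norm x) *\<^sub>R x)" by (intro p(2)) simp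
    then show ?thesis using False by (simp add: is_norm_scaleR[OF N] field_simps)
  qed (simp add: is_norm_nonneg[OF N])
  moreover have "N p > 0" using p(1) by (intro is_norm_pos[OF N]) auto
  ultimately show ?thesis using that by blast
qed

lemma inner_le_dual_norm:
  fixes N :: "'a::euclidean_space \<Rightarrow> real"
  assumes N: "is_norm N"
  shows "v \<bullet> h \<le> dual_norm N v * N h"
proof (cases "h = 0")
  case False
  obtain c where c: "c > 0" "\<And>x. c * norm x \<le> N x" using is_norm_ge_mult_norm[OF N] by blast
  have "bdd_above ((\<lambda>x. v \<bullet> x) ` {x. N x = 1})"
  proof (rule bdd_aboveI2)
    fix x assume "x \<in> {x. N x = 1}"
    then have "norm x \<le> 1 / c" using c(1) c(2)[of x] by (simp add: field_simps)
    then show "v \<bullet> x \<le> norm v * (1 / c)"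
      using norm_cauchy_schwarz[of v x] mult_left_mono[of "norm x" "1 / c" "norm v"] by simp
  qed
  moreover have Nh: "N h > 0" using False by (rule is_norm_pos[OF N])
  then have "N ((1 / N h) *\<^sub>R h) = 1" by (simp add: is_norm_scaleR[OF N])
  ultimately have "v \<bullet> ((1 / N h) *\<^sub>R h) \<le> dual_norm N v"
    unfolding dual_norm_def by (intro cSup_upper) (auto simp del: inner_scaleR_right)
  then show ?thesis using Nh by (simp add: field_simps)
qed (simp add: is_norm_zero[OF N])

section \<open>Smooth convex functions\<close>

lemma has_real_derivative_along_line:
  assumes f': "\<And>y. (f has_derivative (\<lambda>h. f' y \<bullet> h)) (at y)"
  shows "((\<lambda>s. f (y + s *\<^sub>R h)) has_real_derivative (f' (y + s *\<^sub>R h) \<bullet> h)) (at s)"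
proof -
  have "((\<lambda>s. y + s *\<^sub>R h) has_derivative (\<lambda>t. t *\<^sub>R h)) (at s)"
    by (auto intro!: derivative_eq_intros)
  from has_derivative_compose[OF this f']
  show ?thesis by (simp add: has_field_derivative_def mult.commute[of _ "f' _ \<bullet> h"])
qed

lemma convex_on_gradient_inequality:
  assumes f: "convex_on UNIV f" and f': "\<And>y. (f has_derivative (\<lambda>h. f' y \<bullet> h)) (at y)"
  shows "f y + f' y \<bullet> (w - y) \<le> f w"
proof -
  define g where "g = (\<lambda>s::real. f (y + s *\<^sub>R (w - y)))"
  have "convex_on UNIV g"
  proof (rule convex_onI)
    fix t a b :: real assume "t > 0" "t < 1"
    moreover have "y + ((1 - t) *\<^sub>R a + t *\<^sub>R b) *\<^sub>R (w - y)
        = (1 - t) *\<^sub>R (y + a *\<^sub>R (w - y)) + t *\<^sub>R (y + b *\<^sub>R (w - y))"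
      by (simp add: algebra_simps)
    ultimately show "g ((1 - t) *\<^sub>R a + t *\<^sub>R b) \<le> (1 - t) * g a + t * g b"
      unfolding g_def using convex_onD[OF f, of t] by simp
  qed simp
  moreover have "(g has_field_derivative (f' y \<bullet> (w - y))) (at 0)"
    using has_real_derivative_along_line[OF f', of y "w - y" 0] by (simp add: g_def)
  ultimately have "g 1 - g 0 \<ge> f' y \<bullet> (w - y) * (1 - 0)"
    by (intro convex_on_imp_above_tangent) auto
  then show ?thesis by (simp add: g_def)
qed

lemma lipschitz_gradient_upper_bound:
  fixes f :: "'a::euclidean_space \<Rightarrow> real"
  assumes N: "is_norm N" and Q: "convex Q"
    and f': "\<And>y. (f has_derivative (\<lambda>h. f' y \<bullet> h)) (at y)"
    and lip: "\<And>y w. y \<in> Q \<Longrightarrow> w \<in> Q \<Longrightarrow> dual_norm N (f' y - f' w) \<le> L * N (y - w)"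
    and L: "L \<ge> 0" and y: "y \<in> Q" and w: "w \<in> Q"
  shows "f w \<le> f y + f' y \<bullet> (w - y) + L / 2 * (N (w - y))\<^sup>2"
proof -
  define h where "h = w - y"
  define g where "g = (\<lambda>s::real. f (y + s *\<^sub>R h) - s * (f' y \<bullet> h) - L / 2 * s\<^sup>2 * (N h)\<^sup>2)"
  have "g 1 \<le> g 0"
  proof (rule DERIV_nonpos_imp_nonincreasing[where f=g])
    fix s :: real assume s: "0 \<le> s" "s \<le> 1"
    have "y + s *\<^sub>R h = (1 - s) *\<^sub>R y + s *\<^sub>R w" by (simp add: h_def algebra_simps)
    then have ys: "y + s *\<^sub>R h \<in> Q" using Q y w s by (simp add: convex_alt)
    have "(f' (y + s *\<^sub>R h) - f' y) \<bullet> h \<le> dual_norm N (f' (y + s *\<^sub>R h) - f' y) * N h"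
      by (rule inner_le_dual_norm[OF N])
    also have "\<dots> \<le> L * N (s *\<^sub>R h) * N h"
      using lip[OF ys y] by (intro mult_right_mono) (auto simp: is_norm_nonneg[OF N])
    also have "\<dots> = L * s * (N h)\<^sup>2"
      using s by (simp add: is_norm_scaleR[OF N] power2_eq_square)
    finally have "f' (y + s *\<^sub>R h) \<bullet> h - f' y \<bullet> h - L / 2 * (2 * s) * (N h)\<^sup>2 \<le> 0"
      by (simp add: inner_diff_left)
    moreover have "(g has_real_derivative
        (f' (y + s *\<^sub>R h) \<bullet> h - f' y \<bullet> h - L / 2 * (2 * s) * (N h)\<^sup>2)) (at s)"
      unfolding g_def using has_real_derivative_along_line[OF f', of y h s]
      by (auto intro!: derivative_eq_intros)
    ultimately show "\<exists>D. (g has_real_derivative D) (at s) \<and> D \<le> 0" by blast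
  qed simp
  then show ?thesis by (simp add: g_def h_def)
qed

section \<open>Strong convexity and distance-generating functions\<close>

lemma strongly_convex_1_imp_convex_on:
  assumes Q: "convex Q" and sc: "strongly_convex_1 N Q d"
  shows "convex_on Q d"
proof (rule convex_onI[OF _ Q])
  fix t :: real and x y assume t: "t > 0" "t < 1" and xy: "x \<in> Q" "y \<in> Q"
  have "d ((1 - t) *\<^sub>R x + (1 - (1 - t)) *\<^sub>R y)
      \<le> (1 - t) * d x + (1 - (1 - t)) * d y - 1/2 * (1 - t) * (1 - (1 - t)) * (N (x - y))\<^sup>2"
    using sc[unfolded strongly_convex_1_def, rule_format, OF xy, of "1 - t"] t by simp
  moreover have "0 \<le> 1/2 * (1 - t) * t * (N (x - y))\<^sup>2" using t by simp
  ultimately show "d ((1 - t) *\<^sub>R x + t *\<^sub>R y) \<le> (1 - t) * d x + t * d y" by simp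
qed

lemma strongly_convex_1_add_affine:
  assumes "strongly_convex_1 N Q d"
  shows "strongly_convex_1 N Q (\<lambda>x. d x + c + v \<bullet> x)"
  unfolding strongly_convex_1_def
proof safe
  fix x y and a :: real assume "x \<in> Q" "y \<in> Q" "0 \<le> a" "a \<le> 1"
  with assms have "d (a *\<^sub>R x + (1 - a) *\<^sub>R y)
      \<le> a * d x + (1 - a) * d y - 1/2 * a * (1 - a) * (N (x - y))\<^sup>2"
    unfolding strongly_convex_1_def by blast
  then show "d (a *\<^sub>R x + (1 - a) *\<^sub>R y) + c + v \<bullet> (a *\<^sub>R x + (1 - a) *\<^sub>R y)
      \<le> a * (d x + c + v \<bullet> x) + (1 - a) * (d y + c + v \<bullet> y) - 1/2 * a * (1 - a) * (N (x - y))\<^sup>2"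
    by (simp add: inner_add_right algebra_simps)
qed

lemma strongly_convex_1_argmin_growth:
  assumes Q: "convex Q" and sc: "strongly_convex_1 N Q g" and p: "argmin_on Q g p" and y: "y \<in> Q"
  shows "g p + 1/2 * (N (y - p))\<^sup>2 \<le> g y"
proof (rule le_of_le_add_small_multiples)
  fix a :: real assume a: "0 < a" "a \<le> 1"
  have "a *\<^sub>R y + (1 - a) *\<^sub>R p \<in> Q"
    using p y a by (intro convexD[OF Q]) (auto simp: argmin_on_def)
  then have "g p \<le> g (a *\<^sub>R y + (1 - a) *\<^sub>R p)" using p by (simp add: argmin_on_def)
  also have "\<dots> \<le> a * g y + (1 - a) * g p - 1/2 * a * (1 - a) * (N (y - p))\<^sup>2"
    using sc y p a unfolding strongly_convex_1_def argmin_on_def by simp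
  finally have "a * g p \<le> a * g y - 1/2 * a * (1 - a) * (N (y - p))\<^sup>2"
    by (simp add: algebra_simps)
  moreover have "a * (g y + a * (1/2 * (N (y - p))\<^sup>2)) - a * (g p + 1/2 * (N (y - p))\<^sup>2)
      = a * g y - a * g p - 1/2 * a * (1 - a) * (N (y - p))\<^sup>2"
    by (simp add: field_simps)
  ultimately have "a * (g p + 1/2 * (N (y - p))\<^sup>2) \<le> a * (g y + a * (1/2 * (N (y - p))\<^sup>2))"
    by linarith
  then show "g p + 1/2 * (N (y - p))\<^sup>2 \<le> g y + a * (1/2 * (N (y - p))\<^sup>2)"
    using a by simp
qed

lemma argmin_on_add_const: "argmin_on Q (\<lambda>y. c + g y) z \<longleftrightarrow> argmin_on Q g z"
  by (simp add: argmin_on_def)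

locale distance_generating_function =
  fixes N :: "'a::euclidean_space \<Rightarrow> real" and Q :: "'a set"
    and d :: "'a \<Rightarrow> real" and d' :: "'a \<Rightarrow> 'a"
  assumes norm: "is_norm N"
    and closed: "closed Q" and convex: "convex Q"
    and nonneg: "\<And>y. y \<in> Q \<Longrightarrow> 0 \<le> d y"
    and continuous: "continuous_on Q d"
    and strongly_convex: "strongly_convex_1 N Q d"
    and subgradient: "\<And>y. y \<in> dom_subdiff Q d \<Longrightarrow> d' y \<in> subdiff_on Q d y"
    and continuous_subgradient: "continuous_on (dom_subdiff Q d) d'"
begin

lemma bregman_ge_half_sq:
  assumes z: "z \<in> dom_subdiff Q d" and y: "y \<in> Q"
  shows "1/2 * (N (y - z))\<^sup>2 \<le> bregman d d' z y"
proof -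
  have V: "bregman d d' z = (\<lambda>x. d x + (d' z \<bullet> z - d z) + (- d' z) \<bullet> x)"
    by (auto simp: fun_eq_iff bregman_def inner_diff_right)
  have "strongly_convex_1 N Q (bregman d d' z)"
    unfolding V by (rule strongly_convex_1_add_affine[OF strongly_convex])
  moreover have "argmin_on Q (bregman d d' z) z"
    using z subgradient[OF z] by (auto simp: argmin_on_def dom_subdiff_def subdiff_on_def bregman_def)
  ultimately show ?thesis
    using strongly_convex_1_argmin_growth[OF convex _ _ y] by (fastforce simp: bregman_def)
qed

lemma argmin_imp_dom_subdiff:
  assumes z: "argmin_on Q (\<lambda>y. v \<bullet> y + L * d y) z" and L: "L > 0"
  shows "z \<in> dom_subdiff Q d"
proof -
  have "(- (1 / L) *\<^sub>R v) \<in> subdiff_on Q d z"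
    unfolding subdiff_on_def
  proof safe
    fix y assume "y \<in> Q"
    then have "L * d z \<le> L * d y + v \<bullet> (y - z)"
      using z by (simp add: argmin_on_def inner_diff_right algebra_simps)
    then show "d z + - (1 / L) *\<^sub>R v \<bullet> (y - z) \<le> d y" using L by (simp add: field_simps)
  qed
  then show ?thesis using z by (auto simp: dom_subdiff_def argmin_on_def)
qed

lemma exists_argmin_add_sq_dist:
  assumes w: "w \<in> Q" and K: "K > 0"
  obtains m where "argmin_on Q (\<lambda>x. d x + K * (norm (x - w))\<^sup>2) m"
proof -
  define h where "h = (\<lambda>x. d x + K * (norm (x - w))\<^sup>2)"
  define r where "r = 1 + d w / K"
  have "continuous_on (Q \<inter> cball w r) h" unfolding h_def
    by (intro continuous_intros continuous_on_subset[OF continuous]) auto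
  moreover have "compact (Q \<inter> cball w r)" using closed by (intro closed_Int_compact) auto
  moreover have "w \<in> Q \<inter> cball w r" using w nonneg[OF w] K by (simp add: r_def)
  ultimately obtain m where m: "m \<in> Q \<inter> cball w r" "\<And>y. y \<in> Q \<inter> cball w r \<Longrightarrow> h m \<le> h y"
    using continuous_attains_inf[of "Q \<inter> cball w r" h] by blast
  have "h m \<le> h y" if y: "y \<in> Q" for y
  proof (cases "y \<in> cball w r")
    case False
    then have "r < norm (y - w)" by (simp add: dist_norm norm_minus_commute)
    moreover have r1: "1 \<le> r" using nonneg[OF w] K by (simp add: r_def)
    moreover have "norm (y - w) * 1 \<le> norm (y - w) * norm (y - w)"
      using calculation by (intro mult_left_mono) auto
    ultimately have "r \<le> (norm (y - w))\<^sup>2" by (simp add: power2_eq_square)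
    then have "K * r \<le> K * (norm (y - w))\<^sup>2" using K by simp
    moreover have "K * r = K + d w" using K by (simp add: r_def field_simps)
    moreover have "h m \<le> h w" using m(2) w nonneg[OF w] K by (simp add: r_def)
    ultimately show ?thesis using K nonneg[OF y] by (simp add: h_def)
  qed (use m y in auto)
  then show ?thesis using m that by (auto simp: argmin_on_def h_def)
qed

lemma argmin_add_sq_dist_subgradient:
  assumes m: "argmin_on Q (\<lambda>x. d x + K * (norm (x - w))\<^sup>2) m"
  shows "- (2 * K) *\<^sub>R (m - w) \<in> subdiff_on Q d m"
  unfolding subdiff_on_def
proof safe
  fix y assume y: "y \<in> Q"
  have mQ: "m \<in> Q" using m by (simp add: argmin_on_def)
  show "d m + - (2 * K) *\<^sub>R (m - w) \<bullet> (y - m) \<le> d y"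
  proof (rule le_of_le_add_small_multiples[where C = "K * (norm (y - m))\<^sup>2"])
    fix t :: real assume t: "0 < t" "t \<le> 1"
    define p where "p = (1 - t) *\<^sub>R m + t *\<^sub>R y"
    have "p \<in> Q" unfolding p_def using mQ y t by (intro convexD[OF convex]) auto
    then have min: "d m + K * (norm (m - w))\<^sup>2 \<le> d p + K * (norm (p - w))\<^sup>2"
      using m by (simp add: argmin_on_def)
    have convex_d: "d p \<le> (1 - t) * d m + t * d y"
      unfolding p_def using t mQ y
      by (intro convex_onD[OF strongly_convex_1_imp_convex_on[OF convex strongly_convex]]) auto
    have pw: "p - w = (m - w) + t *\<^sub>R (y - m)" by (simp add: p_def algebra_simps)
    have expand: "(norm (p - w))\<^sup>2
        = (norm (m - w))\<^sup>2 + 2 * t * ((m - w) \<bullet> (y - m)) + t\<^sup>2 * (norm (y - m))\<^sup>2"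
      unfolding pw power2_norm_eq_inner
      by (simp add: inner_add_left inner_add_right inner_commute algebra_simps power2_eq_square)
    with min[unfolded expand] convex_d have "d m + K * (norm (m - w))\<^sup>2 \<le> (1 - t) * d m + t * d y
        + K * ((norm (m - w))\<^sup>2 + 2 * t * ((m - w) \<bullet> (y - m)) + t\<^sup>2 * (norm (y - m))\<^sup>2)"
      by linarith
    then have "t * d m \<le> t * (d y + 2 * K * ((m - w) \<bullet> (y - m)) + t * (K * (norm (y - m))\<^sup>2))"
      by (simp add: algebra_simps power2_eq_square)
    then show "d m + - (2 * K) *\<^sub>R (m - w) \<bullet> (y - m) \<le> d y + t * (K * (norm (y - m))\<^sup>2)"
      using t by simp
  qed
qed

lemma dom_subdiff_dense:
  assumes w: "w \<in> Q" and e: "e > 0"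
  obtains m where "m \<in> dom_subdiff Q d" "norm (m - w) < e"
proof -
  define K where "K = (d w + 1) / e\<^sup>2"
  have K: "K > 0" using nonneg[OF w] e by (simp add: K_def)
  obtain m where m: "argmin_on Q (\<lambda>x. d x + K * (norm (x - w))\<^sup>2) m"
    using exists_argmin_add_sq_dist[OF w K] .
  have "K * (norm (m - w))\<^sup>2 \<le> d w" \<comment> \<open>compare with the value at \<open>w\<close>, using \<open>d m \<ge> 0\<close>\<close>
    using m w nonneg[of m] by (force simp: argmin_on_def)
  also have "d w < K * e\<^sup>2" using e by (simp add: K_def)
  finally have "norm (m - w) < e" using K e by (simp add: power_less_imp_less_base)
  moreover have "m \<in> dom_subdiff Q d"
    using argmin_add_sq_dist_subgradient[OF m] m by (auto simp: dom_subdiff_def argmin_on_def)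
  ultimately show ?thesis using that by blast
qed

lemma argmin_variational_inequality:
  assumes z: "argmin_on Q (\<lambda>y. v \<bullet> y + L * d y) z" and L: "L > 0" and y: "y \<in> Q"
  shows "0 \<le> (v + L *\<^sub>R d' z) \<bullet> (y - z)"
proof -
  have zQ: "z \<in> Q" using z by (simp add: argmin_on_def)
  have zD: "z \<in> dom_subdiff Q d" by (rule argmin_imp_dom_subdiff[OF z L])
  have gap: "0 \<le> (v + L *\<^sub>R d' m) \<bullet> (m - z)" if m: "m \<in> dom_subdiff Q d" for m
  proof -
    have "d m + d' m \<bullet> (z - m) \<le> d z"
      using subgradient[OF m] zQ by (simp add: subdiff_on_def)
    then have "d m - d z \<le> d' m \<bullet> (m - z)" by (simp add: inner_diff_right)
    then have "L * d m - L * d z \<le> L * (d' m \<bullet> (m - z))"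
      using L mult_left_mono[of "d m - d z" _ L] by (simp add: right_diff_distrib)
    moreover have "v \<bullet> z + L * d z \<le> v \<bullet> m + L * d m"
      using z m by (simp add: argmin_on_def dom_subdiff_def)
    moreover have "(v + L *\<^sub>R d' m) \<bullet> (m - z) = v \<bullet> m - v \<bullet> z + L * (d' m \<bullet> (m - z))"
      by (simp only: inner_add_left inner_scaleR_left inner_diff_right) (simp add: algebra_simps)
    ultimately show ?thesis by linarith
  qed
  define \<alpha> where "\<alpha> n = inverse (real (Suc n))" for n
  have \<alpha>: "0 < \<alpha> n" "\<alpha> n \<le> 1" for n by (auto simp: \<alpha>_def field_simps)
  have "\<exists>m. m \<in> dom_subdiff Q d \<and> norm (m - (z + \<alpha> n *\<^sub>R (y - z))) < (\<alpha> n)\<^sup>2" for n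
  proof -
    have "(1 - \<alpha> n) *\<^sub>R z + \<alpha> n *\<^sub>R y \<in> Q" using \<alpha>[of n] zQ y by (intro convexD[OF convex]) auto
    moreover have "(1 - \<alpha> n) *\<^sub>R z + \<alpha> n *\<^sub>R y = z + \<alpha> n *\<^sub>R (y - z)" by (simp add: algebra_simps)
    ultimately show ?thesis using dom_subdiff_dense \<alpha>(1)[of n] by (metis zero_less_power)
  qed
  then obtain m where m: "\<And>n. m n \<in> dom_subdiff Q d"
    and close: "\<And>n. norm (m n - (z + \<alpha> n *\<^sub>R (y - z))) < (\<alpha> n)\<^sup>2"
    by metis
  define q where "q n = (1 / \<alpha> n) *\<^sub>R (m n - z)" for n
  have \<alpha>_lim: "\<alpha> \<longlonglongrightarrow> 0" unfolding \<alpha>_def by (rule LIMSEQ_inverse_real_of_nat)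
  have "(\<lambda>n. q n - (y - z)) \<longlonglongrightarrow> 0"
  proof (rule Lim_null_comparison[OF _ \<alpha>_lim], intro always_eventually allI)
    fix n
    have "q n - (y - z) = (1 / \<alpha> n) *\<^sub>R (m n - (z + \<alpha> n *\<^sub>R (y - z)))"
      using \<alpha>(1)[of n] by (simp add: q_def algebra_simps)
    also have "norm \<dots> \<le> (1 / \<alpha> n) * (\<alpha> n)\<^sup>2"
      using close[of n] \<alpha>(1)[of n] by (simp add: less_imp_le divide_le_eq)
    finally show "norm (q n - (y - z)) \<le> \<alpha> n" by (simp add: power2_eq_square)
  qed
  then have q_lim: "q \<longlonglongrightarrow> y - z" by (rule LIM_zero_cancel)
  have "m = (\<lambda>n. z + \<alpha> n *\<^sub>R q n)"
  proof
    show "m n = z + \<alpha> n *\<^sub>R q n" for n using \<alpha>(1)[of n] by (simp add: q_def)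
  qed
  moreover have "(\<lambda>n. z + \<alpha> n *\<^sub>R q n) \<longlonglongrightarrow> z + 0 *\<^sub>R (y - z)"
    by (intro tendsto_intros \<alpha>_lim q_lim)
  ultimately have "m \<longlonglongrightarrow> z" by simp
  then have "(\<lambda>n. d' (m n)) \<longlonglongrightarrow> d' z"
    by (rule continuous_on_tendsto_compose[OF continuous_subgradient _ zD]) (simp add: m)
  then have "(\<lambda>n. (v + L *\<^sub>R d' (m n)) \<bullet> q n) \<longlonglongrightarrow> (v + L *\<^sub>R d' z) \<bullet> (y - z)"
    by (intro tendsto_intros q_lim)
  moreover have "0 \<le> (v + L *\<^sub>R d' (m n)) \<bullet> q n" for n
    using gap[OF m] \<alpha>(1)[of n] by (simp add: q_def)
  ultimately show ?thesis by (intro LIMSEQ_le_const) auto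
qed

lemma argmin_three_point:
  assumes z: "argmin_on Q (\<lambda>y. v \<bullet> y + L * d y) z" and L: "L > 0" and y: "y \<in> Q"
  shows "v \<bullet> z + L * d z + L * bregman d d' z y \<le> v \<bullet> y + L * d y"
proof -
  have "v \<bullet> y + L * d y - (v \<bullet> z + L * d z + L * bregman d d' z y) = (v + L *\<^sub>R d' z) \<bullet> (y - z)"
    by (simp add: bregman_def algebra_simps)
  then show ?thesis using argmin_variational_inequality[OF assms] by linarith
qed

end

section \<open>The accelerated scheme\<close>

lemma Gam_Suc: "Gam \<gamma> (Suc t) = Gam \<gamma> t + \<gamma> (Suc t)"
  by (simp add: Gam_def)

locale accelerated_scheme = distance_generating_function N Q d d'
  for N :: "'a::euclidean_space \<Rightarrow> real" and Q d d' +
  fixes f :: "'a \<Rightarrow> real" and f' :: "'a \<Rightarrow> 'a"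
    and \<gamma> :: "nat \<Rightarrow> real" and Ls :: "nat \<Rightarrow> real" and T :: nat and x z xh u :: "nat \<Rightarrow> 'a"
  assumes f_convex: "convex_on UNIV f"
    and f_grad: "\<And>y. (f has_derivative (\<lambda>h. f' y \<bullet> h)) (at y)"
    and \<gamma>0: "0 < \<gamma> 0" "\<gamma> 0 \<le> 1"
    and \<gamma>_nonneg: "\<And>t. t \<le> T \<Longrightarrow> 0 \<le> \<gamma> t"
    and \<gamma>_sq: "\<And>t. t \<le> T \<Longrightarrow> (\<gamma> t)\<^sup>2 \<le> Gam \<gamma> t"
    and L_pos: "\<And>t. t \<le> T \<Longrightarrow> 0 < Ls t"
    and descent: "\<And>t. t \<le> T \<Longrightarrow>
      f (u t) \<le> f (x t) + f' (x t) \<bullet> (u t - x t) + Ls t / 2 * (N (u t - x t))\<^sup>2"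
    and center: "argmin_on Q d (x 0)" "d (x 0) = 0"
    and z0: "z 0 = u 0"
    and z_argmin: "\<And>t. t \<le> T \<Longrightarrow>
      argmin_on Q (\<lambda>y. (\<Sum>k\<le>t. \<gamma> k * (f (x k) + f' (x k) \<bullet> (y - x k))) + Ls t * d y) (z t)"
    and x_Suc: "\<And>t. t < T \<Longrightarrow>
      x (Suc t) = (\<gamma> (Suc t) / Gam \<gamma> (Suc t)) *\<^sub>R z t + (1 - \<gamma> (Suc t) / Gam \<gamma> (Suc t)) *\<^sub>R u t"
    and xh_prox: "\<And>t. t < T \<Longrightarrow>
      is_prox Q d d' (z t) ((\<gamma> (Suc t) / Ls t) *\<^sub>R f' (x (Suc t))) (xh (Suc t))"
    and u_Suc: "\<And>t. t < T \<Longrightarrow>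
      u (Suc t) = (\<gamma> (Suc t) / Gam \<gamma> (Suc t)) *\<^sub>R xh (Suc t) + (1 - \<gamma> (Suc t) / Gam \<gamma> (Suc t)) *\<^sub>R u t"
begin

definition linearization :: "nat \<Rightarrow> 'a \<Rightarrow> real" where
  "linearization k y = f (x k) + f' (x k) \<bullet> (y - x k)"

definition model :: "nat \<Rightarrow> 'a \<Rightarrow> real" where
  "model t y = (\<Sum>k\<le>t. \<gamma> k * linearization k y) + Ls t * d y"

definition correction :: "nat \<Rightarrow> real" where
  "correction t = (\<Sum>s<t. (Ls s - Ls (Suc s)) * (d (z (Suc s)) - 1/2 * (N (z s - xh (Suc s)))\<^sup>2))"

lemma Gam_pos: "t \<le> T \<Longrightarrow> 0 < Gam \<gamma> t"
  using member_le_sum[of 0 "{..t}" \<gamma>] \<gamma>_nonneg \<gamma>0 by (force simp: Gam_def)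

lemma linearization_le: "linearization k y \<le> f y"
  unfolding linearization_def by (rule convex_on_gradient_inequality[OF f_convex f_grad])

lemma model_Suc:
  "model (Suc t) y = model t y + \<gamma> (Suc t) * linearization (Suc t) y + (Ls (Suc t) - Ls t) * d y"
  by (simp add: model_def algebra_simps)

lemma model_affine: obtains a c where "\<And>y. model t y = a + (c \<bullet> y + Ls t * d y)"
proof
  fix y
  have "\<gamma> k * linearization k y = \<gamma> k * (f (x k) - f' (x k) \<bullet> x k) + (\<gamma> k *\<^sub>R f' (x k)) \<bullet> y" for k
    by (simp add: linearization_def inner_diff_right algebra_simps)
  then show "model t y = (\<Sum>k\<le>t. \<gamma> k * (f (x k) - f' (x k) \<bullet> x k))
      + ((\<Sum>k\<le>t. \<gamma> k *\<^sub>R f' (x k)) \<bullet> y + Ls t * d y)"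
    by (simp add: model_def sum.distrib inner_sum_left)
qed

lemma z_argmin_model: "t \<le> T \<Longrightarrow> argmin_on Q (model t) (z t)"
  using z_argmin by (simp add: model_def[abs_def] linearization_def)

lemma z_in_Q: "t \<le> T \<Longrightarrow> z t \<in> Q"
  using z_argmin_model by (simp add: argmin_on_def)

lemma z_argmin_linear:
  assumes "t \<le> T"
  obtains c where "argmin_on Q (\<lambda>y. c \<bullet> y + Ls t * d y) (z t)"
    "\<And>y. model t y - model t (z t) = c \<bullet> y + Ls t * d y - (c \<bullet> z t + Ls t * d (z t))"
proof -
  obtain a c where model: "\<And>y. model t y = a + (c \<bullet> y + Ls t * d y)"
    using model_affine[of t] by blast
  then have "model t = (\<lambda>y. a + (c \<bullet> y + Ls t * d y))" by auto
  then have "argmin_on Q (\<lambda>y. c \<bullet> y + Ls t * d y) (z t)"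
    using z_argmin_model[OF assms] argmin_on_add_const by metis
  with that show ?thesis by (simp add: model)
qed

lemma z_dom_subdiff: "t \<le> T \<Longrightarrow> z t \<in> dom_subdiff Q d"
  by (metis z_argmin_linear argmin_imp_dom_subdiff L_pos)

lemma model_three_point:
  assumes "t \<le> T" "y \<in> Q"
  shows "model t (z t) + Ls t * bregman d d' (z t) y \<le> model t y"
proof -
  obtain c where "argmin_on Q (\<lambda>y. c \<bullet> y + Ls t * d y) (z t)"
    and "model t y - model t (z t) = c \<bullet> y + Ls t * d y - (c \<bullet> z t + Ls t * d (z t))"
    using z_argmin_linear[OF assms(1)] by metis
  with argmin_three_point[OF _ L_pos[OF assms(1)] assms(2)] show ?thesis by fastforce
qed

lemma linearization_convex_comb:
  "linearization k (a *\<^sub>R p + (1 - a) *\<^sub>R q) = a * linearization k p + (1 - a) * linearization k q"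
  by (simp add: linearization_def inner_add_right inner_diff_right algebra_simps)

lemma estimate_invariant_0: "Gam \<gamma> 0 * f (u 0) \<le> model 0 (z 0) + correction 0"
proof -
  have u0: "u 0 \<in> Q" using z_in_Q[of 0] z0 by simp
  have L0: "0 < Ls 0" using L_pos by simp
  have "1/2 * (N (u 0 - x 0))\<^sup>2 \<le> d (u 0)"
    using strongly_convex_1_argmin_growth[OF convex strongly_convex center(1) u0] center(2) by simp
  then have "Ls 0 / 2 * (N (u 0 - x 0))\<^sup>2 \<le> Ls 0 * d (u 0)"
    using mult_left_mono[OF _ less_imp_le[OF L0]] by fastforce
  moreover have "\<gamma> 0 * (Ls 0 / 2 * (N (u 0 - x 0))\<^sup>2) \<le> Ls 0 / 2 * (N (u 0 - x 0))\<^sup>2"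
    using \<gamma>0 L0 by (intro mult_left_le_one_le) auto
  moreover have "\<gamma> 0 * f (u 0) \<le> \<gamma> 0 * (linearization 0 (u 0) + Ls 0 / 2 * (N (u 0 - x 0))\<^sup>2)"
    using descent[of 0] \<gamma>0 by (intro mult_left_mono) (auto simp: linearization_def)
  ultimately show ?thesis
    by (simp add: Gam_def model_def correction_def z0 distrib_left)
qed

lemma descent_step:
  assumes t: "t < T"
  shows "Gam \<gamma> (Suc t) * f (u (Suc t)) \<le> Gam \<gamma> t * f (u t)
    + \<gamma> (Suc t) * linearization (Suc t) (xh (Suc t)) + Ls (Suc t) / 2 * (N (z t - xh (Suc t)))\<^sup>2"
proof -
  define \<tau> where "\<tau> = \<gamma> (Suc t) / Gam \<gamma> (Suc t)"
  define n2 where "n2 = (N (z t - xh (Suc t)))\<^sup>2"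
  have G: "0 < Gam \<gamma> (Suc t)" using Gam_pos t by simp
  have L: "0 < Ls (Suc t)" using L_pos t by simp
  have \<tau>_weights: "Gam \<gamma> (Suc t) * \<tau> = \<gamma> (Suc t)" "Gam \<gamma> (Suc t) * (1 - \<tau>) = Gam \<gamma> t"
    using G by (simp_all add: \<tau>_def Gam_Suc field_simps)
  have "u (Suc t) - x (Suc t) = \<tau> *\<^sub>R (xh (Suc t) - z t)"
    unfolding x_Suc[OF t] u_Suc[OF t] by (simp add: \<tau>_def algebra_simps)
  then have "(N (u (Suc t) - x (Suc t)))\<^sup>2 = \<tau>\<^sup>2 * n2"
    by (simp add: n2_def is_norm_scaleR[OF norm] is_norm_commute[OF norm, of "xh _"] power_mult_distrib)
  then have "f (u (Suc t)) \<le> linearization (Suc t) (u (Suc t)) + Ls (Suc t) / 2 * (\<tau>\<^sup>2 * n2)"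
    using descent[of "Suc t"] t by (simp add: linearization_def)
  then have "Gam \<gamma> (Suc t) * f (u (Suc t))
      \<le> Gam \<gamma> (Suc t) * linearization (Suc t) (u (Suc t)) + (Gam \<gamma> (Suc t) * \<tau>\<^sup>2) * (Ls (Suc t) / 2 * n2)"
    using G mult_left_mono[of _ _ "Gam \<gamma> (Suc t)"] by (fastforce simp: algebra_simps)
  also have "Gam \<gamma> (Suc t) * \<tau>\<^sup>2 \<le> 1" \<comment> \<open>this is where \<open>\<gamma>\<^sub>t\<^sup>2 \<le> \<Gamma>\<^sub>t\<close> enters\<close>
    using \<gamma>_sq[of "Suc t"] t G by (simp add: \<tau>_def power2_eq_square field_simps)
  then have "(Gam \<gamma> (Suc t) * \<tau>\<^sup>2) * (Ls (Suc t) / 2 * n2) \<le> Ls (Suc t) / 2 * n2"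
    using L G by (intro mult_left_le_one_le) (auto simp: n2_def)
  also have "linearization (Suc t) (u (Suc t))
      = \<tau> * linearization (Suc t) (xh (Suc t)) + (1 - \<tau>) * linearization (Suc t) (u t)"
    unfolding u_Suc[OF t] \<tau>_def by (rule linearization_convex_comb)
  also have "Gam \<gamma> (Suc t) * (\<tau> * linearization (Suc t) (xh (Suc t)) + (1 - \<tau>) * linearization (Suc t) (u t))
      = \<gamma> (Suc t) * linearization (Suc t) (xh (Suc t)) + Gam \<gamma> t * linearization (Suc t) (u t)"
    using \<tau>_weights by (simp only: distrib_left mult.assoc[symmetric])
  also have "Gam \<gamma> t * linearization (Suc t) (u t) \<le> Gam \<gamma> t * f (u t)"
    using Gam_pos[of t] t by (intro mult_left_mono linearization_le) auto
  finally show ?thesis by (simp add: n2_def)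
qed

lemma prox_step:
  assumes t: "t < T"
  shows "\<gamma> (Suc t) * linearization (Suc t) (xh (Suc t)) + Ls t / 2 * (N (z t - xh (Suc t)))\<^sup>2
    \<le> \<gamma> (Suc t) * linearization (Suc t) (z (Suc t)) + model t (z (Suc t)) - model t (z t)"
proof -
  let ?g = "f' (x (Suc t))"
  have L: "0 < Ls t" using L_pos t by simp
  have xh: "xh (Suc t) \<in> Q" using xh_prox[OF t] by (simp add: is_prox_def argmin_on_def)
  have "(\<gamma> (Suc t) / Ls t) *\<^sub>R ?g \<bullet> (xh (Suc t) - z t) + bregman d d' (z t) (xh (Suc t))
      \<le> (\<gamma> (Suc t) / Ls t) *\<^sub>R ?g \<bullet> (z (Suc t) - z t) + bregman d d' (z t) (z (Suc t))"
    using xh_prox[OF t] z_in_Q[of "Suc t"] t by (simp add: is_prox_def argmin_on_def)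
  then have "Ls t * ((\<gamma> (Suc t) / Ls t) * (?g \<bullet> (xh (Suc t) - z t)) + bregman d d' (z t) (xh (Suc t)))
      \<le> Ls t * ((\<gamma> (Suc t) / Ls t) * (?g \<bullet> (z (Suc t) - z t)) + bregman d d' (z t) (z (Suc t)))"
    using L by (intro mult_left_mono) auto
  then have prox: "\<gamma> (Suc t) * (?g \<bullet> (xh (Suc t) - z t)) + Ls t * bregman d d' (z t) (xh (Suc t))
      \<le> \<gamma> (Suc t) * (?g \<bullet> (z (Suc t) - z t)) + Ls t * bregman d d' (z t) (z (Suc t))"
    using L by (simp add: distrib_left)
  have "1/2 * (N (z t - xh (Suc t)))\<^sup>2 \<le> bregman d d' (z t) (xh (Suc t))"
    using bregman_ge_half_sq[OF z_dom_subdiff xh, of t] t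
    by (simp add: is_norm_commute[OF norm, of "z t"])
  then have "Ls t / 2 * (N (z t - xh (Suc t)))\<^sup>2 \<le> Ls t * bregman d d' (z t) (xh (Suc t))"
    using L mult_left_mono[of _ _ "Ls t"] by fastforce
  moreover have "Ls t * bregman d d' (z t) (z (Suc t)) \<le> model t (z (Suc t)) - model t (z t)"
    using model_three_point[of t "z (Suc t)"] z_in_Q[of "Suc t"] t by simp
  moreover have "\<gamma> (Suc t) * linearization (Suc t) (xh (Suc t)) - \<gamma> (Suc t) * linearization (Suc t) (z (Suc t))
      = \<gamma> (Suc t) * (?g \<bullet> (xh (Suc t) - z t)) - \<gamma> (Suc t) * (?g \<bullet> (z (Suc t) - z t))"
    by (simp add: linearization_def inner_diff_right algebra_simps)
  ultimately show ?thesis using prox by linarith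
qed

lemma estimate_invariant: "t \<le> T \<Longrightarrow> Gam \<gamma> t * f (u t) \<le> model t (z t) + correction t"
proof (induction t)
  case 0
  show ?case by (rule estimate_invariant_0)
next
  case (Suc t)
  then have t: "t < T" by simp
  have "correction (Suc t) = correction t + Ls t * d (z (Suc t)) - Ls (Suc t) * d (z (Suc t))
      - Ls t / 2 * (N (z t - xh (Suc t)))\<^sup>2 + Ls (Suc t) / 2 * (N (z t - xh (Suc t)))\<^sup>2"
    by (simp add: correction_def field_simps)
  moreover have "model (Suc t) (z (Suc t)) = model t (z (Suc t))
      + \<gamma> (Suc t) * linearization (Suc t) (z (Suc t)) + Ls (Suc t) * d (z (Suc t)) - Ls t * d (z (Suc t))"
    by (simp add: model_Suc algebra_simps)
  ultimately show ?case using descent_step[OF t] prox_step[OF t] Suc.IH t by linarith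
qed

theorem convergence_rate:
  assumes xs: "xs \<in> Q"
  shows "f (u T) - f xs \<le> 1 / Gam \<gamma> T * (Ls T * d xs + correction T)"
proof -
  have "model T (z T) \<le> model T xs" using z_argmin_model[of T] xs by (simp add: argmin_on_def)
  also have "\<dots> \<le> Gam \<gamma> T * f xs + Ls T * d xs"
  proof -
    have "(\<Sum>k\<le>T. \<gamma> k * linearization k xs) \<le> (\<Sum>k\<le>T. \<gamma> k * f xs)"
      using \<gamma>_nonneg by (intro sum_mono mult_left_mono linearization_le) auto
    then show ?thesis by (simp add: model_def Gam_def sum_distrib_right)
  qed
  finally have "Gam \<gamma> T * (f (u T) - f xs) \<le> Ls T * d xs + correction T"
    using estimate_invariant[of T] by (simp add: algebra_simps)
  then show ?thesis using Gam_pos[of T] by (simp add: field_simps)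
qed

end

theorem theorem2:
  fixes N :: "'a::euclidean_space \<Rightarrow> real"
    and Q :: "'a set" and f :: "'a \<Rightarrow> real" and f' :: "'a \<Rightarrow> 'a" and Lf :: real
    and d :: "'a \<Rightarrow> real" and d' :: "'a \<Rightarrow> 'a"
    and xs :: 'a and T :: nat and \<gamma> :: "nat \<Rightarrow> real"
    and Ls :: "nat \<Rightarrow> real" and x z xh u :: "nat \<Rightarrow> 'a"
  assumes N: "is_norm N"
    and Q: "closed Q" "convex Q"
    and f_convex: "convex_on UNIV f"
    and f_grad: "\<And>y. (f has_derivative (\<lambda>h. f' y \<bullet> h)) (at y)"
    and f_attains: "\<exists>y\<in>Q. \<forall>w\<in>Q. f y \<le> f w"
    and Lf_pos: "Lf > 0"
    and f_lip: "\<And>y w. y \<in> Q \<Longrightarrow> w \<in> Q \<Longrightarrow> dual_norm N (f' y - f' w) \<le> Lf * N (y - w)"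
    and d_nonneg: "\<And>y. y \<in> Q \<Longrightarrow> d y \<ge> 0"
    and d_cont: "continuous_on Q d"
    and d_sc: "strongly_convex_1 N Q d"
    and d'_sel: "\<And>y. y \<in> dom_subdiff Q d \<Longrightarrow> d' y \<in> subdiff_on Q d y"
    and d'_cont: "continuous_on (dom_subdiff Q d) d'"
    and xs_min: "argmin_on Q f xs"
    and \<gamma>0: "0 < \<gamma> 0" "\<gamma> 0 \<le> 1"
    and \<gamma>_nonneg: "\<And>t. t \<le> T + 1 \<Longrightarrow> \<gamma> t \<ge> 0"
    and \<gamma>_sq: "\<And>t. t \<le> T + 1 \<Longrightarrow> (\<gamma> t)\<^sup>2 \<le> Gam \<gamma> t"
    and L0: "Ls 0 = Lf"
    and x0: "argmin_on Q d (x 0)" and center0: "d (x 0) = 0"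
    and u0: "argmin_on Q (\<lambda>y. \<gamma> 0 * (f (x 0) + f' (x 0) \<bullet> (y - x 0)) + Ls 0 * d y) (u 0)"
    and z0: "z 0 = u 0"
    and Lt: "\<And>t. 1 \<le> t \<Longrightarrow> t \<le> T \<Longrightarrow> 0 < Ls t \<and> Ls t \<le> Lf \<and>
               f (u t) \<le> f (x t) + f' (x t) \<bullet> (u t - x t) + Ls t / 2 * (N (u t - x t))\<^sup>2"
    and zt: "\<And>t. 1 \<le> t \<Longrightarrow> t \<le> T \<Longrightarrow>
               argmin_on Q (\<lambda>y. (\<Sum>k\<le>t. \<gamma> k * (f (x k) + f' (x k) \<bullet> (y - x k))) + Ls t * d y) (z t)"
    and xt: "\<And>t. t \<le> T \<Longrightarrow>
               x (t + 1) = (\<gamma> (t + 1) / Gam \<gamma> (t + 1)) *\<^sub>R z t + (1 - \<gamma> (t + 1) / Gam \<gamma> (t + 1)) *\<^sub>R u t"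
    and xht: "\<And>t. t \<le> T \<Longrightarrow>
               is_prox Q d d' (z t) ((\<gamma> (t + 1) / Ls t) *\<^sub>R f' (x (t + 1))) (xh (t + 1))"
    and ut: "\<And>t. t \<le> T \<Longrightarrow>
               u (t + 1) = (\<gamma> (t + 1) / Gam \<gamma> (t + 1)) *\<^sub>R xh (t + 1) + (1 - \<gamma> (t + 1) / Gam \<gamma> (t + 1)) *\<^sub>R u t"
  shows "f (u T) - f xs \<le> 1 / Gam \<gamma> T * (Ls T * d xs +
           (\<Sum>t<T. (Ls t - Ls (t + 1)) * (d (z (t + 1)) - 1/2 * (N (z t - xh (t + 1)))\<^sup>2)))"
proof -
  have x0Q: "x 0 \<in> Q" and u0Q: "u 0 \<in> Q" using x0 u0 by (simp_all add: argmin_on_def)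
  interpret accelerated_scheme N Q d d' f f' \<gamma> Ls T x z xh u
  proof
    fix t assume t: "t \<le> T"
    show "0 < Ls t" using t Lt[of t] L0 Lf_pos by (cases t) auto
    show "f (u t) \<le> f (x t) + f' (x t) \<bullet> (u t - x t) + Ls t / 2 * (N (u t - x t))\<^sup>2"
      \<comment> \<open>for \<open>t = 0\<close> this is the Lipschitz bound, since \<open>Ls 0 = Lf\<close>\<close>
      using t Lt[of t] L0 Lf_pos
        lipschitz_gradient_upper_bound[OF N Q(2) f_grad f_lip _ x0Q u0Q] by (cases t) auto
    show "argmin_on Q (\<lambda>y. (\<Sum>k\<le>t. \<gamma> k * (f (x k) + f' (x k) \<bullet> (y - x k))) + Ls t * d y) (z t)"
      using t zt[of t] u0 z0 by (cases t) auto
  qed (use N Q d_nonneg d_cont d_sc d'_sel d'_cont f_convex f_grad \<gamma>0 \<gamma>_nonneg \<gamma>_sq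
      x0 center0 z0 xt xht ut in auto)
  show ?thesis
    using convergence_rate[of xs] xs_min by (simp add: argmin_on_def correction_def)
qed

end
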